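(* Let $\mathcal{A}\subset\mathbb{P}^2\mathbb{C}$ be a line arrangement with $|\mathcal{A}|=12$ all of whose intersection points have multiplicity at most $5$. Suppose the system $\mathbf{S}$ over $\mathbb{F}_2$ admits a non-constant solution. Then each line of $\mathcal{A}$ contains exactly $3$ quadruple points.
   Context: For a prime $p$, the system $\mathbf{S}$ over $\mathbb{F}_p$ is the linear system in unknowns $(\eta_H)_{H\in\mathcal{A}}$, one unknown for each line, with one set of conditions for each intersection point $X$ of $\mathcal{A}$. Let $m_X$ be the number of lines through $X$. If $p\mid m_X$, the condition is $\sum_{H\ni X}\eta_H=0$. If $p\nmid m_X$, the condition is $\eta_H=\eta_K$ for all lines $H,K$ through $X$. A solution is non-constant if not all $\eta_H$ are equal. A quadruple point is a point lying on exactly $4$ lines of $\mathcal{A}$. *)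

theory Defs
  imports "HOL-Number_Theory.Cong" Complex_Main
begin

text \<open>Points and lines of the complex projective plane are represented by
  homogeneous coordinates: nonzero vectors in C^3, up to nonzero scalars.\<close>

type_synonym cvec = "complex \<times> complex \<times> complex"

definition nonzero_vec :: "cvec \<Rightarrow> bool" where
  "nonzero_vec v \<longleftrightarrow> v \<noteq> (0, 0, 0)"

definition scale_vec :: "complex \<Rightarrow> cvec \<Rightarrow> cvec" where
  "scale_vec c v = (case v of (a, b, d) \<Rightarrow> (c * a, c * b, c * d))"

definition proj_eq :: "cvec \<Rightarrow> cvec \<Rightarrow> bool" where
  "proj_eq u v \<longleftrightarrow> (\<exists>c. c \<noteq> 0 \<and> v = scale_vec c u)"

definition on_line :: "cvec \<Rightarrow> cvec \<Rightarrow> bool" where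
  "on_line L X \<longleftrightarrow>
     (case L of (a, b, c) \<Rightarrow> case X of (x, y, z) \<Rightarrow> a * x + b * y + c * z = 0)"

definition line_arrangement :: "cvec set \<Rightarrow> bool" where
  "line_arrangement A \<longleftrightarrow> finite A \<and> (\<forall>L\<in>A. nonzero_vec L) \<and>
     (\<forall>L\<in>A. \<forall>K\<in>A. proj_eq L K \<longrightarrow> L = K)"

definition lines_through :: "cvec set \<Rightarrow> cvec \<Rightarrow> cvec set" where
  "lines_through A X = {H \<in> A. on_line H X}"

definition mult :: "cvec set \<Rightarrow> cvec \<Rightarrow> nat" where
  "mult A X = card (lines_through A X)"

definition intersection_point :: "cvec set \<Rightarrow> cvec \<Rightarrow> bool" where
  "intersection_point A X \<longleftrightarrow> nonzero_vec X \<and> mult A X \<ge> 2"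

definition quadruple_point :: "cvec set \<Rightarrow> cvec \<Rightarrow> bool" where
  "quadruple_point A X \<longleftrightarrow> nonzero_vec X \<and> mult A X = 4"

text \<open>Solutions of the system S over F_p: values in F_p are represented by
  integers, equality in F_p being congruence modulo p.\<close>
definition system_S_solution :: "nat \<Rightarrow> cvec set \<Rightarrow> (cvec \<Rightarrow> int) \<Rightarrow> bool" where
  "system_S_solution p A \<eta> \<longleftrightarrow>
     (\<forall>X. intersection_point A X \<longrightarrow>
        (if p dvd mult A X
         then [(\<Sum>H\<in>lines_through A X. \<eta> H) = 0] (mod int p)
         else (\<forall>H\<in>lines_through A X. \<forall>K\<in>lines_through A X. [\<eta> H = \<eta> K] (mod int p))))"

definition nonconstant_sol :: "nat \<Rightarrow> cvec set \<Rightarrow> (cvec \<Rightarrow> int) \<Rightarrow> bool" where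
  "nonconstant_sol p A \<eta> \<longleftrightarrow> (\<exists>H\<in>A. \<exists>K\<in>A. \<not> [\<eta> H = \<eta> K] (mod int p))"

text \<open>The set of projective points (equivalence classes of representatives)
  that are quadruple points on the line H.\<close>
definition proj_class :: "cvec \<Rightarrow> cvec set" where
  "proj_class X = {Y. proj_eq X Y}"

definition quadruple_points_on :: "cvec set \<Rightarrow> cvec \<Rightarrow> cvec set set" where
  "quadruple_points_on A H = proj_class ` {X. quadruple_point A X \<and> on_line H X}"

end

theory Submission
  imports Defs
begin

(* Colour every line H of the arrangement by the parity of eta(H).
   The system S over F_2, together with the bound m_X <= 5, forces the colouring
   to be "balanced": whenever two lines of different colours meet at a point X,
   then X is a quadruple point carrying exactly two lines of each colour.

   For a balanced colouring, fix a line H of one colour.  Every line K of the other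
   colour meets H in such a mixed point, which carries exactly one further line of
   H's colour, the partner of K.  Two lines K, K' have the same partner iff they pass
   through the same point of H, so each partner arises from exactly two lines K; this
   gives |other colour| = 2 * |partners of H| <= 2 * (|colour of H| - 1).  Applied to
   both colours with 12 lines in total, both colour classes have exactly 6 lines and
   H has 3 partners.  The quadruple points on H are exactly the meets of H with its
   partners: a quadruple point on H with four lines of H's colour would need three
   further lines of that colour avoiding the 3 partners, but only 2 remain. *)

section \<open>Incidence geometry of the projective plane\<close>

text \<open>The cross product of two lines is their common point (and dually).\<close>
definition cross :: "cvec \<Rightarrow> cvec \<Rightarrow> cvec" where
  "cross u v = (case u of (a, b, c) \<Rightarrow> case v of (d, e, f) \<Rightarrow>
                  (b * f - c * e, c * d - a * f, a * e - b * d))"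

lemma on_line_cross_left: "on_line u (cross u v)"
  by (cases u; cases v) (auto simp: on_line_def cross_def algebra_simps)

lemma on_line_cross_right: "on_line v (cross u v)"
  by (cases u; cases v) (auto simp: on_line_def cross_def algebra_simps)

lemma cross_eq_zero_imp_multiple:
  assumes "nonzero_vec u" "cross u v = (0, 0, 0)"
  shows "\<exists>t. v = scale_vec t u"
proof -
  obtain a b c where u: "u = (a, b, c)" by (cases u) auto
  obtain d e f where v: "v = (d, e, f)" by (cases v) auto
  have eqs: "b * f = c * e" "c * d = a * f" "a * e = b * d"
    using assms(2) by (auto simp: u v cross_def)
  consider "a \<noteq> 0" | "a = 0" "b \<noteq> 0" | "a = 0" "b = 0" "c \<noteq> 0"
    using assms(1) by (auto simp: u nonzero_vec_def)
  then show ?thesis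
  proof cases
    case 1
    then have "v = scale_vec (d / a) u" using eqs by (simp add: u v scale_vec_def field_simps)
    then show ?thesis by blast
  next
    case 2
    then have "v = scale_vec (e / b) u" using eqs by (simp add: u v scale_vec_def field_simps)
    then show ?thesis by blast
  next
    case 3
    then have "v = scale_vec (f / c) u" using eqs by (simp add: u v scale_vec_def field_simps)
    then show ?thesis by blast
  qed
qed

lemma proj_eqI: "nonzero_vec v \<Longrightarrow> v = scale_vec t u \<Longrightarrow> proj_eq u v"
  unfolding proj_eq_def nonzero_vec_def by (cases u) (auto simp: scale_vec_def)

lemma proj_eq_refl: "proj_eq X X"
  unfolding proj_eq_def by (rule exI[of _ 1]) (cases X, auto simp: scale_vec_def)

lemma proj_eq_sym:
  assumes "proj_eq X Y" shows "proj_eq Y X"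
proof -
  obtain t where t: "t \<noteq> 0" "Y = scale_vec t X" using assms proj_eq_def by blast
  then have "X = scale_vec (inverse t) Y" by (cases X) (auto simp: scale_vec_def)
  then show ?thesis using t(1) unfolding proj_eq_def by (intro exI[of _ "inverse t"]) auto
qed

lemma proj_eq_trans:
  assumes "proj_eq X Y" "proj_eq Y Z" shows "proj_eq X Z"
proof -
  obtain s where s: "s \<noteq> 0" "Y = scale_vec s X" using assms(1) proj_eq_def by blast
  obtain t where t: "t \<noteq> 0" "Z = scale_vec t Y" using assms(2) proj_eq_def by blast
  have "Z = scale_vec (t * s) X" using s t by (cases X) (auto simp: scale_vec_def)
  then show ?thesis using s(1) t(1) unfolding proj_eq_def by (intro exI[of _ "t * s"]) auto
qed

lemma proj_class_eq_iff: "proj_class X = proj_class Y \<longleftrightarrow> proj_eq X Y"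
proof
  assume "proj_class X = proj_class Y"
  moreover have "Y \<in> proj_class Y" unfolding proj_class_def using proj_eq_refl by simp
  ultimately show "proj_eq X Y" unfolding proj_class_def by (metis mem_Collect_eq)
next
  assume "proj_eq X Y"
  then show "proj_class X = proj_class Y" unfolding proj_class_def
    using proj_eq_trans proj_eq_sym by blast
qed

lemma on_line_proj_eq:
  assumes "proj_eq X Y" shows "on_line L X \<longleftrightarrow> on_line L Y"
proof -
  obtain t where t: "t \<noteq> 0" "Y = scale_vec t X" using assms proj_eq_def by blast
  obtain a b d where L: "L = (a, b, d)" by (cases L) auto
  obtain x y z where X: "X = (x, y, z)" by (cases X) auto
  have "a * (t * x) + b * (t * y) + d * (t * z) = t * (a * x + b * y + d * z)"
    by (simp add: algebra_simps)
  then show ?thesis using t by (simp add: L X on_line_def scale_vec_def)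
qed

lemma lines_through_proj_eq: "proj_eq X Y \<Longrightarrow> lines_through A X = lines_through A Y"
  unfolding lines_through_def using on_line_proj_eq by blast

lemma cross_nonzero:
  assumes "nonzero_vec L" "nonzero_vec K" "\<not> proj_eq L K"
  shows "nonzero_vec (cross L K)"
  using cross_eq_zero_imp_multiple[OF assms(1)] proj_eqI[OF assms(2)] assms(3)
  unfolding nonzero_vec_def by blast

lemma meet_unique:
  assumes "nonzero_vec L" "nonzero_vec K" "\<not> proj_eq L K" "nonzero_vec X"
    and "on_line L X" "on_line K X"
  shows "proj_eq (cross L K) X"
proof -
  obtain a b c where L: "L = (a, b, c)" by (cases L) auto
  obtain d e f where K: "K = (d, e, f)" by (cases K) auto
  obtain x y z where X: "X = (x, y, z)" by (cases X) auto
  have "a * x + b * y + c * z = 0" "d * x + e * y + f * z = 0"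
    using assms(5,6) by (auto simp: L K X on_line_def)
  then have "cross (cross L K) X = (0, 0, 0)" unfolding L K X cross_def by (simp, algebra)
  then show ?thesis
    using cross_eq_zero_imp_multiple[OF cross_nonzero[OF assms(1-3)]] proj_eqI[OF assms(4)]
    by blast
qed

lemma arrangement_meet:
  assumes "line_arrangement A" "H \<in> A" "K \<in> A" "H \<noteq> K"
  shows "nonzero_vec (cross H K) \<and> H \<in> lines_through A (cross H K)
           \<and> K \<in> lines_through A (cross H K)"
  using assms cross_nonzero on_line_cross_left on_line_cross_right
  unfolding line_arrangement_def lines_through_def by blast

lemma arrangement_meet_unique:
  assumes "line_arrangement A" "H \<in> A" "K \<in> A" "H \<noteq> K"
    and "nonzero_vec X" "on_line H X" "on_line K X"
  shows "proj_eq (cross H K) X"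
  using assms meet_unique unfolding line_arrangement_def by blast

section \<open>Balanced two-colourings\<close>

locale balanced_colouring =
  fixes A :: "cvec set" and c :: "cvec \<Rightarrow> bool"
  assumes arrangement: "line_arrangement A"
    and mixed_point: "\<lbrakk>nonzero_vec X; H \<in> lines_through A X; K \<in> lines_through A X; c H \<noteq> c K\<rbrakk>
      \<Longrightarrow> card (lines_through A X) = 4 \<and> card {L \<in> lines_through A X. c L} = 2"
begin

lemma finite_A: "finite A"
  using arrangement line_arrangement_def by blast

lemma finite_lines_through: "finite (lines_through A X)"
  using finite_A unfolding lines_through_def by simp

lemma mixed_point_uncoloured:
  assumes "nonzero_vec X" "H \<in> lines_through A X" "K \<in> lines_through A X" "c H \<noteq> c K"
  shows "card {L \<in> lines_through A X. \<not> c L} = 2"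
proof -
  let ?T = "lines_through A X"
  have "{L \<in> ?T. \<not> c L} = ?T - {L \<in> ?T. c L}" by auto
  moreover have "card (?T - {L \<in> ?T. c L}) = card ?T - card {L \<in> ?T. c L}"
    using finite_lines_through by (intro card_Diff_subset) auto
  ultimately show ?thesis using mixed_point[OF assms] by simp
qed

lemma complement: "balanced_colouring A (\<lambda>L. \<not> c L)"
  using arrangement mixed_point mixed_point_uncoloured
  by unfold_locales blast+

definition partner :: "cvec \<Rightarrow> cvec \<Rightarrow> cvec" where
  "partner H K = the_elem ({L \<in> lines_through A (cross H K). \<not> c L} - {H})"

definition partners :: "cvec \<Rightarrow> cvec set" where
  "partners H = partner H ` {K \<in> A. c K}"

lemma partner_spec:
  assumes H: "H \<in> A" "\<not> c H" and K: "K \<in> A" "c K"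
  shows "{L \<in> lines_through A (cross H K). \<not> c L} = {H, partner H K}" "partner H K \<noteq> H"
proof -
  have meet: "nonzero_vec (cross H K)" "H \<in> lines_through A (cross H K)"
      "K \<in> lines_through A (cross H K)"
    using arrangement_meet[OF arrangement H(1) K(1)] H K by auto
  let ?S = "{L \<in> lines_through A (cross H K). \<not> c L}"
  have "H \<in> ?S" using meet H by auto
  moreover have "card ?S = 2" using mixed_point_uncoloured[OF meet] H K by auto
  ultimately have "card (?S - {H}) = 1" by simp
  then obtain P where P: "?S - {H} = {P}" by (rule card_1_singletonE)
  then have "partner H K = P" unfolding partner_def by simp
  then show "?S = {H, partner H K}" "partner H K \<noteq> H" using P \<open>H \<in> ?S\<close> by auto
qed

lemma partners_subset:
  assumes "H \<in> A" "\<not> c H"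
  shows "partners H \<subseteq> {L \<in> A. \<not> c L} - {H}"
proof
  fix y assume "y \<in> partners H"
  then obtain K where K: "K \<in> A" "c K" "y = partner H K" unfolding partners_def by blast
  then have "y \<in> {L \<in> lines_through A (cross H K). \<not> c L}" "y \<noteq> H"
    using partner_spec[OF assms K(1,2)] by auto
  then show "y \<in> {L \<in> A. \<not> c L} - {H}" unfolding lines_through_def by auto
qed

lemma partner_eq_iff:
  assumes H: "H \<in> A" "\<not> c H" and H': "H' \<in> A" "\<not> c H'" "H' \<noteq> H" and K: "K \<in> A" "c K"
  shows "partner H K = H' \<longleftrightarrow> on_line K (cross H H')"
proof -
  have HK: "H \<noteq> K" and HH': "H \<noteq> H'" using H K H' by auto
  have meet_HK: "nonzero_vec (cross H K)"
    using arrangement_meet[OF arrangement H(1) K(1) HK] by blast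
  have meet_HH': "nonzero_vec (cross H H')"
    using arrangement_meet[OF arrangement H(1) H'(1) HH'] by blast
  have spec: "{L \<in> lines_through A (cross H K). \<not> c L} = {H, partner H K}"
    using partner_spec[OF H K] by simp
  show ?thesis
  proof
    assume "partner H K = H'"
    then have "on_line H' (cross H K)" using spec unfolding lines_through_def by blast
    then have "proj_eq (cross H H') (cross H K)"
      using arrangement_meet_unique[OF arrangement H(1) H'(1) HH' meet_HK on_line_cross_left]
      by blast
    then show "on_line K (cross H H')"
      using on_line_proj_eq on_line_cross_right by blast
  next
    assume "on_line K (cross H H')"
    then have "proj_eq (cross H K) (cross H H')"
      using arrangement_meet_unique[OF arrangement H(1) K(1) HK meet_HH' on_line_cross_left]
      by blast
    then have "on_line H' (cross H K)"
      using on_line_proj_eq on_line_cross_right by blast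
    then have "H' \<in> {L \<in> lines_through A (cross H K). \<not> c L}"
      using H' unfolding lines_through_def by blast
    then show "partner H K = H'" using spec H' by blast
  qed
qed

lemma partner_meet_mixed:
  assumes H: "H \<in> A" "\<not> c H" and y: "y \<in> partners H"
  shows "nonzero_vec (cross H y)" "H \<in> lines_through A (cross H y)"
    "y \<in> lines_through A (cross H y)" "card (lines_through A (cross H y)) = 4"
    "card {L \<in> lines_through A (cross H y). c L} = 2"
    "card {L \<in> lines_through A (cross H y). \<not> c L} = 2"
proof -
  obtain K where K: "K \<in> A" "c K" "partner H K = y" using y unfolding partners_def by blast
  have yA: "y \<in> A" "\<not> c y" "y \<noteq> H" using partners_subset[OF H] y by auto
  show meet: "nonzero_vec (cross H y)" "H \<in> lines_through A (cross H y)"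
    "y \<in> lines_through A (cross H y)"
    using arrangement_meet[OF arrangement H(1) yA(1)] yA(3) by auto
  have "K \<in> lines_through A (cross H y)"
    using partner_eq_iff[OF H yA K(1,2)] K unfolding lines_through_def by simp
  then show "card (lines_through A (cross H y)) = 4"
    "card {L \<in> lines_through A (cross H y). c L} = 2"
    "card {L \<in> lines_through A (cross H y). \<not> c L} = 2"
    using mixed_point[OF meet(1,2)] mixed_point_uncoloured[OF meet(1,2)] H K by auto
qed

text \<open>Each partner is the partner of exactly two lines, so the other colour class
  has twice as many lines as H has partners.\<close>
lemma card_other_colour:
  assumes H: "H \<in> A" "\<not> c H"
  shows "card {K \<in> A. c K} = 2 * card (partners H)"
proof -
  let ?C = "{K \<in> A. c K}"
  have "card ?C = (\<Sum>y\<in>partners H. card {K \<in> ?C. partner H K = y})"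
    unfolding card_eq_sum partners_def by (rule sum.image_gen) (simp add: finite_A)
  also have "\<dots> = (\<Sum>y\<in>partners H. 2)"
  proof (rule sum.cong[OF refl])
    fix y assume y: "y \<in> partners H"
    have "y \<in> A" "\<not> c y" "y \<noteq> H" using partners_subset[OF H] y by auto
    then have "{K \<in> ?C. partner H K = y} = {L \<in> lines_through A (cross H y). c L}"
      using partner_eq_iff[OF H] unfolding lines_through_def by blast
    then show "card {K \<in> ?C. partner H K = y} = 2" using partner_meet_mixed[OF H y] by simp
  qed
  finally show ?thesis by simp
qed

lemma colour_classes_six:
  assumes "card A = 12" and H: "H \<in> A" "\<not> c H" and K: "K \<in> A" "c K"
  shows "card {L \<in> A. \<not> c L} = 6" "card {L \<in> A. c L} = 6"
proof -
  interpret neg: balanced_colouring A "\<lambda>L. \<not> c L" by (rule complement)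
  let ?C0 = "{L \<in> A. \<not> c L}" and ?C1 = "{L \<in> A. c L}"
  have "A = ?C0 \<union> ?C1" "?C0 \<inter> ?C1 = {}" by auto
  then have total: "card ?C0 + card ?C1 = 12"
    using assms(1) card_Un_disjoint[of ?C0 ?C1] finite_A by simp
  have "card (partners H) \<le> card (?C0 - {H})"
    using card_mono[OF _ partners_subset[OF H]] finite_A by simp
  then have bound1: "card (partners H) \<le> card ?C0 - 1" using H finite_A by simp
  have "card (neg.partners K) \<le> card (?C1 - {K})"
    using card_mono[OF _ neg.partners_subset] K finite_A by simp
  then have bound0: "card (neg.partners K) \<le> card ?C1 - 1" using K finite_A by simp
  have "card ?C0 = 2 * card (neg.partners K)" using neg.card_other_colour K by simp
  then show "card ?C0 = 6" "card ?C1 = 6"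
    using card_other_colour[OF H] bound0 bound1 total by presburger+
qed

text \<open>Distinct partners meet H in distinct points: a common point would carry the three
  lines H, y1, y2 of H's colour, but a mixed point carries only two.\<close>
lemma partner_points_inj:
  assumes H: "H \<in> A" "\<not> c H"
  shows "inj_on (\<lambda>y. proj_class (cross H y)) (partners H)"
proof
  fix y1 y2 assume y1: "y1 \<in> partners H" and y2: "y2 \<in> partners H"
    and "proj_class (cross H y1) = proj_class (cross H y2)"
  then have "proj_eq (cross H y1) (cross H y2)" by (simp add: proj_class_eq_iff)
  then have "y2 \<in> lines_through A (cross H y1)"
    using lines_through_proj_eq partner_meet_mixed(3)[OF H y2] by blast
  then have "{H, y1, y2} \<subseteq> {L \<in> lines_through A (cross H y1). \<not> c L}"
    using partner_meet_mixed(2,3)[OF H y1] partners_subset[OF H] y1 y2 H by auto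
  then have "card {H, y1, y2} \<le> card {L \<in> lines_through A (cross H y1). \<not> c L}"
    by (rule card_mono[rotated]) (simp add: finite_lines_through)
  then have "card {H, y1, y2} \<le> 2" using partner_meet_mixed(6)[OF H y1] by simp
  moreover have "H \<noteq> y1" "H \<noteq> y2" using partners_subset[OF H] y1 y2 by auto
  ultimately show "y1 = y2" by (auto simp: card_insert_if split: if_splits)
qed

lemma mixed_quadruple_point_is_partner_point:
  assumes H: "H \<in> A" "\<not> c H" and X: "nonzero_vec X" "on_line H X"
    and K: "K \<in> lines_through A X" "c K"
  shows "proj_class X \<in> (\<lambda>y. proj_class (cross H y)) ` partners H"
proof -
  have KA: "K \<in> A" "on_line K X" using K unfolding lines_through_def by auto
  have HK: "H \<noteq> K" using H K by auto
  let ?y = "partner H K"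
  have y: "?y \<in> partners H" unfolding partners_def using KA K by auto
  have yA: "?y \<in> A" "?y \<noteq> H" using partners_subset[OF H] y by auto
  have "on_line ?y (cross H K)" using partner_spec(1)[OF H KA(1) K(2)] unfolding lines_through_def by blast
  then have "on_line ?y X"
    using on_line_proj_eq arrangement_meet_unique[OF arrangement H(1) KA(1) HK X(1,2) KA(2)] by blast
  then have "proj_eq (cross H ?y) X"
    using arrangement_meet_unique[OF arrangement H(1) yA(1) yA(2)[symmetric] X] by blast
  then show ?thesis using y proj_class_eq_iff proj_eq_sym by blast
qed

text \<open>If H's colour class has 6 lines and H has 3 partners, every quadruple point on H
  carries a line of the other colour: otherwise its three further lines of H's colour
  would avoid the partners, leaving only 6 - 1 - 3 = 2 candidates.\<close>
lemma quadruple_point_not_monochrome: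
  assumes H: "H \<in> A" "\<not> c H" and six: "card {L \<in> A. \<not> c L} = 6"
    and three: "card (partners H) = 3"
    and X: "nonzero_vec X" "on_line H X" "card (lines_through A X) = 4"
  shows "\<exists>K \<in> lines_through A X. c K"
proof (rule ccontr)
  let ?T = "lines_through A X" and ?free = "({L \<in> A. \<not> c L} - {H}) - partners H"
  assume "\<not> (\<exists>K \<in> ?T. c K)"
  then have mono: "\<forall>L \<in> ?T. \<not> c L" by blast
  have avoid: "y \<notin> partners H" if y: "y \<in> ?T" "y \<noteq> H" for y
  proof
    assume partner_y: "y \<in> partners H"
    have "y \<in> A" "on_line y X" using y(1) unfolding lines_through_def by auto
    then have "proj_eq (cross H y) X"
      using arrangement_meet_unique[OF arrangement H(1) _ y(2)[symmetric] X(1,2)] by blast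
    then have "lines_through A (cross H y) = ?T" by (rule lines_through_proj_eq)
    then have "card {L \<in> ?T. \<not> c L} = 2" using partner_meet_mixed(6)[OF H partner_y] by simp
    moreover have "{L \<in> ?T. \<not> c L} = ?T" using mono by blast
    ultimately show False using X(3) by simp
  qed
  have "?T - {H} \<subseteq> ?free" using mono avoid unfolding lines_through_def by blast
  then have "card (?T - {H}) \<le> card ?free" by (rule card_mono[rotated]) (simp add: finite_A)
  moreover have "H \<in> ?T" using H X(2) unfolding lines_through_def by simp
  then have "card (?T - {H}) = 3" using X(3) finite_lines_through by simp
  moreover have "finite (partners H)" using finite_A unfolding partners_def by simp
  then have "card ?free = 2"
    using card_Diff_subset[OF _ partners_subset[OF H]] six three H finite_A by simp
  ultimately show False by simp
qed

text \<open>Hence the quadruple points on H are exactly the meets with its 3 partners.\<close>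
lemma card_quadruple_points_on:
  assumes H: "H \<in> A" "\<not> c H" and six: "card {L \<in> A. \<not> c L} = 6"
    and three: "card (partners H) = 3"
  shows "card (quadruple_points_on A H) = 3"
proof -
  have "quadruple_points_on A H = (\<lambda>y. proj_class (cross H y)) ` partners H"
  proof
    show "quadruple_points_on A H \<subseteq> (\<lambda>y. proj_class (cross H y)) ` partners H"
      using quadruple_point_not_monochrome[OF H six three] mixed_quadruple_point_is_partner_point[OF H]
      unfolding quadruple_points_on_def quadruple_point_def mult_def by blast
    show "(\<lambda>y. proj_class (cross H y)) ` partners H \<subseteq> quadruple_points_on A H"
      using partner_meet_mixed[OF H] on_line_cross_left
      unfolding quadruple_points_on_def quadruple_point_def mult_def by blast
  qed
  then show ?thesis using card_image[OF partner_points_inj[OF H]] three by simp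
qed

end

section \<open>Solutions of S over F_2 give balanced colourings\<close>

lemma cong_mod_2_iff: "[(a::int) = b] (mod int 2) \<longleftrightarrow> (odd a \<longleftrightarrow> odd b)"
  unfolding cong_def by presburger

text \<open>At a point where lines of both parities meet, the system forbids an odd
  multiplicity; an even multiplicity at most 5 with an even number of odd lines,
  neither zero nor all of them, must be 4 with two odd lines.\<close>
lemma parity_colouring_balanced:
  fixes \<eta> :: "cvec \<Rightarrow> int"
  assumes arr: "line_arrangement A"
    and bound: "\<forall>X. intersection_point A X \<longrightarrow> mult A X \<le> 5"
    and sol: "system_S_solution 2 A \<eta>"
  shows "balanced_colouring A (\<lambda>L. odd (\<eta> L))"
proof (rule balanced_colouring.intro[OF arr])
  fix X H K
  let ?T = "lines_through A X" and ?O = "{L \<in> lines_through A X. odd (\<eta> L)}"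
  assume X: "nonzero_vec X" and HK: "H \<in> ?T" "K \<in> ?T" "odd (\<eta> H) \<noteq> odd (\<eta> K)"
  have finT: "finite ?T" using arr unfolding line_arrangement_def lines_through_def by simp
  have "H \<noteq> K" using HK by blast
  then have "card {H, K} = 2" by simp
  moreover have "card {H, K} \<le> card ?T" using HK finT by (intro card_mono) auto
  ultimately have ip: "intersection_point A X"
    using X unfolding intersection_point_def mult_def by simp
  have le5: "card ?T \<le> 5" using bound ip unfolding mult_def by blast
  have eqs: "if 2 dvd mult A X
         then [(\<Sum>L\<in>?T. \<eta> L) = 0] (mod int 2)
         else (\<forall>L\<in>?T. \<forall>M\<in>?T. [\<eta> L = \<eta> M] (mod int 2))"
    using sol[unfolded system_S_solution_def, rule_format, OF ip] .
  have even_T: "even (card ?T)"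
  proof (rule ccontr)
    assume "odd (card ?T)"
    then have "[\<eta> H = \<eta> K] (mod int 2)" using eqs HK(1,2) unfolding mult_def by simp
    then show False using HK(3) cong_mod_2_iff by blast
  qed
  then have "[(\<Sum>L\<in>?T. \<eta> L) = 0] (mod int 2)" using eqs unfolding mult_def by simp
  then have "even (sum \<eta> ?T)" using cong_mod_2_iff by simp
  then have even_O: "even (card ?O)" using even_sum_iff[OF finT, of \<eta>] by simp
  obtain L M where "L \<in> ?O" "M \<in> ?T" "M \<notin> ?O"
    using HK by (cases "odd (\<eta> H)") auto
  then have "?O \<noteq> {}" and proper: "?O \<subset> ?T" by blast+
  then have "0 < card ?O" using finT by (simp add: card_gt_0_iff)
  moreover have "card ?O < card ?T" using psubset_card_mono[OF finT proper] .
  ultimately show "card ?T = 4 \<and> card ?O = 2" using even_T even_O le5 by presburger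
qed

theorem lemma3p5:
  fixes A :: "cvec set" and \<eta> :: "cvec \<Rightarrow> int"
  assumes "line_arrangement A"
    and "card A = 12"
    and "\<forall>X. intersection_point A X \<longrightarrow> mult A X \<le> 5"
    and "system_S_solution 2 A \<eta>"
    and "nonconstant_sol 2 A \<eta>"
  shows "\<forall>H\<in>A. card (quadruple_points_on A H) = 3"
proof -
  define c where "c = (\<lambda>L. odd (\<eta> L))"
  interpret balanced_colouring A c
    unfolding c_def using parity_colouring_balanced assms(1,3,4) .
  interpret neg: balanced_colouring A "\<lambda>L. \<not> c L" by (rule complement)
  obtain H0 K0 where "H0 \<in> A" "\<not> c H0" "K0 \<in> A" "c K0"
    using assms(5) cong_mod_2_iff unfolding nonconstant_sol_def c_def by metis
  then have six: "card {L \<in> A. \<not> c L} = 6" "card {L \<in> A. c L} = 6"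
    using colour_classes_six assms(2) by blast+
  show ?thesis
  proof
    fix H assume H: "H \<in> A"
    show "card (quadruple_points_on A H) = 3"
    proof (cases "c H")
      case False
      then show ?thesis
        using card_quadruple_points_on card_other_colour H six by simp
    next
      case True
      then show ?thesis
        using neg.card_quadruple_points_on neg.card_other_colour H six by simp
    qed
  qed
qed

end
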